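(* Let $\mathbb{F}$ be a field with $\mathrm{char}(\mathbb{F})\neq2$ and let $X$ be a unitary alternative $\mathbb{F}$-algebra with unit $e$. Then the map $\mathrm{Inn}\colon X\to\mathcal{E}(X)$, $x\mapsto(x\cdot-,\,-\cdot x)$, is a bijection (indeed a linear isomorphism compatible with the multiplications). Concretely, every pair $(f*-,-*f)\in\mathcal{E}(X)$ satisfies $f*e=e*f=:\alpha\in X$ and $f*x=\alpha x$, $x*f=x\alpha$ for all $x\in X$, and $\mathrm{Inn}$ has trivial kernel.
   Context: An alternative algebra satisfies $(yx)x=y(xx)$ and $x(xy)=(xx)y$. For an alternative algebra $X$, $\mathcal{E}(X)$ (the external weak actor) is the subspace of all pairs $(f*-,\,-*f)\in\mathrm{End}(X)\times\mathrm{End}(X)$ such that for all $x,y\in X$: $f*(xy)=(x*f)y+(f*x)y-x(f*y)$, $(xy)*f=x(f*y)+x(y*f)-(x*f)y$, $x(y*f)=(yx)*f+(xy)*f-y(x*f)$, $(f*x)y=f*(yx)+f*(xy)-(f*y)x$. It carries the bilinear partial multiplication $\langle(f*-,-*f),(g*-,-*g)\rangle=(h*-,-*h)$ with $h*x=-(f*x)*g+f*(g*x)+f*(x*g)$ and $x*h=(x*f)*g+(f*x)*g-f*(x*g)$, defined whenever the result lies in $\mathcal{E}(X)$. *)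

theory Defs
  imports Complex_Main
begin

definition bilinear_mult :: "('f::field \<Rightarrow> 'x \<Rightarrow> 'x) \<Rightarrow> ('x::ab_group_add \<Rightarrow> 'x \<Rightarrow> 'x) \<Rightarrow> bool" where
  "bilinear_mult sc mul \<longleftrightarrow>
     (\<forall>x y z. mul (x + y) z = mul x z + mul y z) \<and>
     (\<forall>x y z. mul x (y + z) = mul x y + mul x z) \<and>
     (\<forall>a x y. mul (sc a x) y = sc a (mul x y)) \<and>
     (\<forall>a x y. mul x (sc a y) = sc a (mul x y))"

definition alternative_algebra :: "('f::field \<Rightarrow> 'x \<Rightarrow> 'x) \<Rightarrow> ('x::ab_group_add \<Rightarrow> 'x \<Rightarrow> 'x) \<Rightarrow> bool" where
  "alternative_algebra sc mul \<longleftrightarrow>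
     Vector_Spaces.vector_space sc \<and> bilinear_mult sc mul \<and>
     (\<forall>x y. mul (mul y x) x = mul y (mul x x)) \<and>
     (\<forall>x y. mul x (mul x y) = mul (mul x x) y)"

definition unit_elem :: "('x \<Rightarrow> 'x \<Rightarrow> 'x) \<Rightarrow> 'x \<Rightarrow> bool" where
  "unit_elem mul e \<longleftrightarrow> (\<forall>x. mul e x = x \<and> mul x e = x)"

text \<open>The external weak actor: pairs (L, R) = (f*-, -*f) of linear endomorphisms
satisfying the four identities.\<close>

definition ext_weak_actor :: "('f::field \<Rightarrow> 'x \<Rightarrow> 'x) \<Rightarrow> ('x::ab_group_add \<Rightarrow> 'x \<Rightarrow> 'x)
    \<Rightarrow> (('x \<Rightarrow> 'x) \<times> ('x \<Rightarrow> 'x)) set" where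
  "ext_weak_actor sc mul = {(L, R).
     Vector_Spaces.linear sc sc L \<and> Vector_Spaces.linear sc sc R \<and>
     (\<forall>x y. L (mul x y) = mul (R x) y + mul (L x) y - mul x (L y)) \<and>
     (\<forall>x y. R (mul x y) = mul x (L y) + mul x (R y) - mul (R x) y) \<and>
     (\<forall>x y. mul x (R y) = R (mul y x) + R (mul x y) - mul y (R x)) \<and>
     (\<forall>x y. mul (L x) y = L (mul y x) + L (mul x y) - mul (L y) x)}"

text \<open>The (raw) product of two pairs; the partial multiplication on E(X) is this
product, defined whenever the result lies in E(X).\<close>

definition ewa_prod :: "('x::ab_group_add \<Rightarrow> 'x \<Rightarrow> 'x)
    \<Rightarrow> ('x \<Rightarrow> 'x) \<times> ('x \<Rightarrow> 'x) \<Rightarrow> ('x \<Rightarrow> 'x) \<times> ('x \<Rightarrow> 'x) \<Rightarrow> ('x \<Rightarrow> 'x) \<times> ('x \<Rightarrow> 'x)" where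
  "ewa_prod mul P Q =
     ((\<lambda>x. - (snd Q (fst P x)) + fst P (fst Q x) + fst P (snd Q x)),
      (\<lambda>x. snd Q (snd P x) + snd Q (fst P x) - fst P (snd Q x)))"

definition Inn :: "('x \<Rightarrow> 'x \<Rightarrow> 'x) \<Rightarrow> 'x \<Rightarrow> ('x \<Rightarrow> 'x) \<times> ('x \<Rightarrow> 'x)" where
  "Inn mul a = ((\<lambda>x. mul a x), (\<lambda>x. mul x a))"

end

theory Submission
  imports Defs
begin

text \<open>Linearizing the two alternative laws shows that every left and right
multiplication, the inner pair of any element, satisfies the four identities
defining \<open>\<E>(X)\<close>, and that the raw product of inner pairs is the inner pair of the
product. Conversely, evaluating the first two identities of a pair \<open>(L, R)\<close> at the
unit gives \<open>L e = R e =: \<alpha>\<close> and \<open>2 L y = 2 \<alpha> y\<close>, \<open>2 R x = 2 x \<alpha>\<close>; dividing by 2 shows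
that \<open>(L, R)\<close> is the inner pair of \<open>\<alpha>\<close>. Injectivity of \<open>Inn\<close> is \<open>a = a e\<close>.\<close>

context vector_space
begin

lemma double_cancel:
  assumes "(2::'a) \<noteq> 0" and "x + x = y + (y::'b)"
  shows "x = y"
proof -
  have "scale 2 x = scale 2 y"
    using assms(2) by (metis one_add_one scale_left_distrib scale_one)
  then show ?thesis
    using assms(1) by simp
qed

lemma ext_weak_actor_unit_eq_Inn:
  assumes two: "(2::'a) \<noteq> 0" and unit: "unit_elem mul e"
    and P: "P \<in> ext_weak_actor scale mul"
  shows "fst P e = snd P e" and "P = Inn mul (fst P e)"
proof -
  obtain L R where PLR: "P = (L, R)" by (cases P)
  have L_mul: "\<And>x y. L (mul x y) = mul (R x) y + mul (L x) y - mul x (L y)"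
    and R_mul: "\<And>x y. R (mul x y) = mul x (L y) + mul x (R y) - mul (R x) y"
    using P unfolding PLR ext_weak_actor_def by blast+
  have e: "\<And>x. mul e x = x" "\<And>x. mul x e = x"
    using unit by (auto simp: unit_elem_def)
  have LR_e: "L e = R e"
    using L_mul[of e e] by (simp only: e diff_add_cancel add_diff_cancel)
  define \<alpha> where "\<alpha> = L e"
  have "L y = mul \<alpha> y" for y
  proof (rule double_cancel[OF two])
    have "L y = mul \<alpha> y + mul \<alpha> y - L y"
      using L_mul[of e y] by (simp only: e LR_e \<alpha>_def)
    then show "L y + L y = mul \<alpha> y + mul \<alpha> y"
      by (simp only: eq_diff_eq add_ac)
  qed
  moreover have "R x = mul x \<alpha>" for x
  proof (rule double_cancel[OF two])
    have "R x = mul x \<alpha> + mul x \<alpha> - R x"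
      using R_mul[of x e] by (simp only: e LR_e \<alpha>_def)
    then show "R x + R x = mul x \<alpha> + mul x \<alpha>"
      by (simp only: eq_diff_eq add_ac)
  qed
  ultimately have P_Inn: "P = Inn mul \<alpha>"
    by (simp add: PLR Inn_def fun_eq_iff)
  show "fst P e = snd P e"
    using LR_e by (simp add: PLR)
  show "P = Inn mul (fst P e)"
    by (simp add: P_Inn Inn_def e)
qed

end

lemma inj_Inn_unit:
  assumes "unit_elem mul e"
  shows "inj (Inn mul)"
proof (rule injI)
  fix a b
  assume "Inn mul a = Inn mul b"
  then have "mul a e = mul b e"
    by (simp add: Inn_def fun_eq_iff)
  then show "a = b"
    using assms by (simp add: unit_elem_def)
qed

locale bilinear_algebra = vector_space scale
  for scale :: "'a::field \<Rightarrow> 'b::ab_group_add \<Rightarrow> 'b" +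
  fixes mul :: "'b \<Rightarrow> 'b \<Rightarrow> 'b"
  assumes bilinear: "bilinear_mult scale mul"
begin

lemma mul_add_left: "mul (x + y) z = mul x z + mul y z"
  and mul_add_right: "mul x (y + z) = mul x y + mul x z"
  and mul_scale_left: "mul (scale c x) y = scale c (mul x y)"
  and mul_scale_right: "mul x (scale c y) = scale c (mul x y)"
  using bilinear by (auto simp: bilinear_mult_def)

lemma linear_mul_left: "Vector_Spaces.linear scale scale (mul a)"
  by (simp add: Vector_Spaces.linear_iff vector_space_axioms mul_add_right mul_scale_right)

lemma linear_mul_right: "Vector_Spaces.linear scale scale (\<lambda>x. mul x a)"
  by (simp add: Vector_Spaces.linear_iff vector_space_axioms mul_add_left mul_scale_left)

lemma Inn_add:
  "fst (Inn mul (a + b)) x = fst (Inn mul a) x + fst (Inn mul b) x"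
  "snd (Inn mul (a + b)) x = snd (Inn mul a) x + snd (Inn mul b) x"
  by (simp_all add: Inn_def mul_add_left mul_add_right)

lemma Inn_scale:
  "fst (Inn mul (scale c a)) x = scale c (fst (Inn mul a) x)"
  "snd (Inn mul (scale c a)) x = scale c (snd (Inn mul a) x)"
  by (simp_all add: Inn_def mul_scale_left mul_scale_right)

end

locale alternative_alg = bilinear_algebra +
  assumes right_alternative: "mul (mul y x) x = mul y (mul x x)"
    and left_alternative: "mul x (mul x y) = mul (mul x x) y"
begin

lemma left_alternative_linearized:
  "mul x (mul z y) + mul z (mul x y) = mul (mul x z) y + mul (mul z x) y"
proof -
  have "mul (x + z) (mul (x + z) y) = mul (mul (x + z) (x + z)) y"
    by (rule left_alternative)
  then have "mul x (mul x y) + mul x (mul z y) + (mul z (mul x y) + mul z (mul z y))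
      = mul (mul x x) y + mul (mul x z) y + (mul (mul z x) y + mul (mul z z) y)"
    by (simp add: mul_add_left mul_add_right add_ac)
  then show ?thesis
    using left_alternative[of x y] left_alternative[of z y] by (simp add: algebra_simps)
qed

lemma right_alternative_linearized:
  "mul (mul y x) z + mul (mul y z) x = mul y (mul x z) + mul y (mul z x)"
proof -
  have "mul (mul y (x + z)) (x + z) = mul y (mul (x + z) (x + z))"
    by (rule right_alternative)
  then have "mul (mul y x) x + mul (mul y z) x + (mul (mul y x) z + mul (mul y z) z)
      = mul y (mul x x) + mul y (mul z x) + (mul y (mul x z) + mul y (mul z z))"
    by (simp add: mul_add_left mul_add_right add_ac)
  then show ?thesis
    using right_alternative[of y x] right_alternative[of y z] by (simp add: algebra_simps)
qed

lemma Inn_in_ext_weak_actor: "Inn mul a \<in> ext_weak_actor scale mul"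
  unfolding ext_weak_actor_def Inn_def mem_Collect_eq case_prod_conv
proof (intro conjI allI linear_mul_left linear_mul_right)
  fix x y
  show "mul a (mul x y) = mul (mul x a) y + mul (mul a x) y - mul x (mul a y)"
    using left_alternative_linearized[of a x y] by (simp only: eq_diff_eq add_ac)
  show "mul (mul x y) a = mul x (mul a y) + mul x (mul y a) - mul (mul x a) y"
    using right_alternative_linearized[of x a y] by (simp only: eq_diff_eq add_ac)
  show "mul x (mul y a) = mul (mul y x) a + mul (mul x y) a - mul y (mul x a)"
    using left_alternative_linearized[of x y a] by (simp only: eq_diff_eq add_ac)
  show "mul (mul a x) y = mul a (mul y x) + mul a (mul x y) - mul (mul a y) x"
    using right_alternative_linearized[of a x y] by (simp only: eq_diff_eq add_ac)
qed

lemma ewa_prod_Inn: "ewa_prod mul (Inn mul a) (Inn mul b) = Inn mul (mul a b)"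
proof -
  have "- mul (mul a x) b + mul a (mul b x) + mul a (mul x b) = mul (mul a b) x" for x
    using right_alternative_linearized[of a b x] by (simp add: algebra_simps)
  moreover have "mul (mul x a) b + mul (mul a x) b - mul a (mul x b) = mul x (mul a b)" for x
    using left_alternative_linearized[of x a b] by (simp add: algebra_simps)
  ultimately show ?thesis
    by (simp add: ewa_prod_def Inn_def fun_eq_iff)
qed

lemma Inn_image_unit:
  assumes "(2::'a) \<noteq> 0" and "unit_elem mul e"
  shows "range (Inn mul) = ext_weak_actor scale mul"
proof
  show "range (Inn mul) \<subseteq> ext_weak_actor scale mul"
    using Inn_in_ext_weak_actor by blast
  show "ext_weak_actor scale mul \<subseteq> range (Inn mul)"
    using ext_weak_actor_unit_eq_Inn(2)[OF assms] by blast
qed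

end

lemma alternative_alg_iff: "alternative_alg sc mul \<longleftrightarrow> alternative_algebra sc mul"
  by (auto simp: alternative_alg_def alternative_alg_axioms_def bilinear_algebra_def
      bilinear_algebra_axioms_def alternative_algebra_def)

theorem mainTheorem4:
  fixes sc :: "'f::field \<Rightarrow> 'x::ab_group_add \<Rightarrow> 'x"
    and mul :: "'x \<Rightarrow> 'x \<Rightarrow> 'x"
    and e :: 'x
  assumes char: "(2::'f) \<noteq> 0"
    and alt: "alternative_algebra sc mul"
    and unit: "unit_elem mul e"
  shows "bij_betw (Inn mul) UNIV (ext_weak_actor sc mul)
    \<and> (\<forall>a b x. fst (Inn mul (a + b)) x = fst (Inn mul a) x + fst (Inn mul b) x
                 \<and> snd (Inn mul (a + b)) x = snd (Inn mul a) x + snd (Inn mul b) x)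
    \<and> (\<forall>c a x. fst (Inn mul (sc c a)) x = sc c (fst (Inn mul a) x)
                 \<and> snd (Inn mul (sc c a)) x = sc c (snd (Inn mul a) x))
    \<and> (\<forall>a b. ewa_prod mul (Inn mul a) (Inn mul b) = Inn mul (mul a b))
    \<and> (\<forall>P \<in> ext_weak_actor sc mul.
         fst P e = snd P e \<and>
         (\<forall>x. fst P x = mul (fst P e) x \<and> snd P x = mul x (fst P e)))
    \<and> (\<forall>a. Inn mul a = Inn mul 0 \<longrightarrow> a = 0)"
proof -
  interpret alternative_alg sc mul
    using alt by (simp add: alternative_alg_iff)
  have inj: "inj (Inn mul)"
    using unit by (rule inj_Inn_unit)
  have inner: "fst P e = snd P e \<and> (\<forall>x. fst P x = mul (fst P e) x \<and> snd P x = mul x (fst P e))"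
    if "P \<in> ext_weak_actor sc mul" for P
    using ext_weak_actor_unit_eq_Inn[OF char unit that] by (metis Inn_def fst_conv snd_conv)
  have bij: "bij_betw (Inn mul) UNIV (ext_weak_actor sc mul)"
    using inj Inn_image_unit[OF char unit] by (simp add: bij_betw_def)
  have kernel: "Inn mul a = Inn mul 0 \<longrightarrow> a = 0" for a
    using inj by (simp add: inj_eq)
  show ?thesis
    using bij Inn_add Inn_scale ewa_prod_Inn inner kernel by blast
qed

end
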